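(* Let $\mathcal G$ be a finite, connected, simple bipartite graph with $N_{\mathcal V}$ vertices and $N_{\mathcal E}$ edges, each edge identified with $[0,1]$, and let $\mathcal L$ be the self-adjoint operator on $L^2(\mathcal G)$ described in the context. For $\lambda\in\mathbb C$ let $E(\lambda)$ denote the eigenspace of $\mathcal L$ with eigenvalue $\lambda$. Then \[\dim E(n^2\pi^2)=N_{\mathcal E}-N_{\mathcal V}+2,\qquad n=1,2,\dots.\]
   Context: $L^2(\mathcal G)=\bigoplus_{e\in\mathcal E}L^2(e)$ with each $L^2(e)=L^2[0,1]$. The operator $\mathcal L$ acts by $-d^2/dx^2$ on each edge, with domain consisting of $f\in L^2(\mathcal G)$ that are continuous on $\mathcal G$, continuously differentiable on each edge with $f_e'$ absolutely continuous and $f''\in L^2(\mathcal G)$, and satisfying at every vertex $v$ the condition $\sum_{e\sim v}\partial_\nu f_e(v)=0$, where the sum is over edges incident on $v$ and $\partial_\nu$ is the derivative in the local coordinate identifying $e$ with $[0,1]$ and $v$ with $0$. *)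

theory Defs
  imports "HOL-Analysis.Analysis" "HOL-Library.Function_Algebras"
begin

text \<open>A graph is given by a vertex set V and a set E of edges, each edge written as an
ordered pair (a,b); the ordering only fixes the identification of the edge with [0,1]
(a corresponds to 0, b to 1). Simplicity: no loops and at most one edge between two
vertices (hence not both (a,b) and (b,a)).\<close>

definition simple_graph :: "'v set \<Rightarrow> ('v \<times> 'v) set \<Rightarrow> bool" where
  "simple_graph V E \<longleftrightarrow> finite V \<and> E \<subseteq> V \<times> V \<and>
     (\<forall>(a,b)\<in>E. a \<noteq> b \<and> (b,a) \<notin> E)"

definition graph_connected :: "'v set \<Rightarrow> ('v \<times> 'v) set \<Rightarrow> bool" where
  "graph_connected V E \<longleftrightarrow> (\<forall>u\<in>V. \<forall>w\<in>V. (u, w) \<in> (E \<union> E\<inverse>)\<^sup>*)"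

definition graph_bipartite :: "'v set \<Rightarrow> ('v \<times> 'v) set \<Rightarrow> bool" where
  "graph_bipartite V E \<longleftrightarrow> (\<exists>A \<subseteq> V. \<forall>(a,b)\<in>E. (a \<in> A \<longleftrightarrow> b \<notin> A))"

text \<open>An element of L^2(G) = direct sum over edges of L^2[0,1] is represented by
f :: edge => real => complex. Elements of the domain of the operator have a continuous
representative on each edge, which is unique; we normalise it to vanish outside [0,1]
and on non-edges, so representatives are in bijection with elements of the domain.\<close>

definition normalised_fun :: "('v \<times> 'v) set \<Rightarrow> ('v \<times> 'v \<Rightarrow> real \<Rightarrow> complex) \<Rightarrow> bool" where
  "normalised_fun E f \<longleftrightarrow> (\<forall>e. \<forall>x. (e \<notin> E \<or> x \<notin> {0..1}) \<longrightarrow> f e x = 0)"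

text \<open>H^2-regularity on an edge: u is C^1 on [0,1] with derivative u', u' is absolutely
continuous with derivative u'' (i.e. u' is the indefinite Lebesgue integral of u''), and
u'' is in L^2[0,1].\<close>

definition edge_H2 :: "(real \<Rightarrow> complex) \<Rightarrow> (real \<Rightarrow> complex) \<Rightarrow> (real \<Rightarrow> complex) \<Rightarrow> bool" where
  "edge_H2 u u' u'' \<longleftrightarrow>
     (\<forall>x\<in>{0..1}. (u has_vector_derivative u' x) (at x within {0..1})) \<and>
     continuous_on {0..1} u' \<and>
     u'' absolutely_integrable_on {0..1} \<and>
     (\<lambda>x. (norm (u'' x))\<^sup>2) integrable_on {0..1} \<and>
     (\<forall>x\<in>{0..1}. (u'' has_integral (u' x - u' 0)) {0..x})"

text \<open>Domain of the operator L: continuity at vertices and the Kirchhoff condition,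
where the outgoing derivative at the vertex a of edge (a,b) is u'(0), and at the vertex b
(local coordinate 1 - x) it is - u'(1).\<close>

definition in_dom_L ::
  "'v set \<Rightarrow> ('v \<times> 'v) set \<Rightarrow> ('v \<times> 'v \<Rightarrow> real \<Rightarrow> complex)
     \<Rightarrow> ('v \<times> 'v \<Rightarrow> real \<Rightarrow> complex) \<Rightarrow> ('v \<times> 'v \<Rightarrow> real \<Rightarrow> complex) \<Rightarrow> bool" where
  "in_dom_L V E f f' f'' \<longleftrightarrow>
     (\<forall>e\<in>E. edge_H2 (f e) (f' e) (f'' e)) \<and>
     (\<exists>\<phi> :: 'v \<Rightarrow> complex. \<forall>(a,b)\<in>E. f (a,b) 0 = \<phi> a \<and> f (a,b) 1 = \<phi> b) \<and>
     (\<forall>v\<in>V. (\<Sum>e\<in>{e\<in>E. fst e = v}. f' e 0) - (\<Sum>e\<in>{e\<in>E. snd e = v}. f' e 1) = 0)"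

definition eigenspace_L ::
  "'v set \<Rightarrow> ('v \<times> 'v) set \<Rightarrow> complex \<Rightarrow> ('v \<times> 'v \<Rightarrow> real \<Rightarrow> complex) set" where
  "eigenspace_L V E lam = {f. normalised_fun E f \<and>
     (\<exists>f' f''. in_dom_L V E f f' f'' \<and>
        (\<forall>e\<in>E. AE x in lborel. x \<in> {0..1} \<longrightarrow> - f'' e x = lam * f e x))}"

definition fscale :: "complex \<Rightarrow> ('e \<Rightarrow> real \<Rightarrow> complex) \<Rightarrow> ('e \<Rightarrow> real \<Rightarrow> complex)" where
  "fscale c f = (\<lambda>e x. c * f e x)"

end

theory Submission
  imports Defs
begin

(* On an edge, an eigenfunction for the eigenvalue (n pi)^2 is A cos (n pi x) + B sin (n pi x),
   so its value and its derivative at x = 1 are s = (-1)^n times those at x = 0. Continuity at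
   the vertices therefore makes the vertex values a multiple c * sigma of the function sigma that
   is 1 on one side of the bipartition and s on the other, and Kirchhoff's condition says that the
   sine amplitudes B lie in the kernel of the twisted incidence map B |-> sum_out B - s sum_in B.
   For a connected graph the image of this map is the hyperplane sum_v sigma v g v = 0, so by
   rank-nullity the kernel has dimension |E| - |V| + 1, and the eigenspace, parametrised by c
   and B, has dimension |E| - |V| + 2. *)

section \<open>Linear algebra in spaces of functions\<close>

definition scale_fun :: "'b::field \<Rightarrow> ('a \<Rightarrow> 'b) \<Rightarrow> 'a \<Rightarrow> 'b" where
  "scale_fun c g = (\<lambda>x. c * g x)"

interpretation pointwise: vector_space "scale_fun :: 'b::field \<Rightarrow> ('a \<Rightarrow> 'b) \<Rightarrow> 'a \<Rightarrow> 'b"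
  by unfold_locales (auto simp: scale_fun_def fun_eq_iff algebra_simps)

lemma vector_space_fscale: "vector_space fscale"
  by unfold_locales (auto simp: fscale_def fun_eq_iff algebra_simps)

lemma (in vector_space) span_Int_span_Diff:
  assumes "independent B" and "K \<subseteq> B"
  shows "span K \<inter> span (B - K) = {0}"
proof -
  have "x = 0" if "x \<in> span K" "x \<in> span (B - K)" for x
  proof -
    have "representation B x = representation K x" "representation B x = representation (B - K) x"
      using representation_extend[OF assms(1)] that assms(2) by blast+
    then have "representation B x = (\<lambda>b. 0)"
      using representation_ne_zero[of K x] representation_ne_zero[of "B - K" x] by (metis Diff_iff)
    then show ?thesis
      using sum_nonzero_representation_eq[OF assms(1), of x] that(1) span_mono[OF assms(2)] by auto
  qed
  then show ?thesis by (auto simp: span_zero)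
qed

context vector_space_pair begin

lemma rank_nullity_subspace:
  assumes "Vector_Spaces.linear s1 s2 f" and "vs1.subspace U" and "finite W" and "U \<subseteq> vs1.span W"
  shows "vs1.dim U = vs1.dim {x\<in>U. f x = 0} + vs2.dim (f ` U)"
proof -
  interpret f: Vector_Spaces.linear s1 s2 f by fact
  let ?N = "{x\<in>U. f x = 0}"
  obtain K where K: "K \<subseteq> ?N" "vs1.independent K" "?N \<subseteq> vs1.span K"
    using vs1.maximal_independent_subset[of ?N] by blast
  obtain B where B: "K \<subseteq> B" "B \<subseteq> U" "vs1.independent B" "U \<subseteq> vs1.span B"
    using vs1.maximal_independent_subset_extend[of K U] K by blast
  have "finite B"
    using vs1.independent_span_bound[OF \<open>finite W\<close> B(3)] B(2) assms(4) by blast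
  have span_B: "vs1.span B = U"
    using B(2,4) vs1.span_minimal[OF _ assms(2)] by blast
  have inj: "inj_on f (vs1.span (B - K))"
  proof (rule f.inj_on_iff_eq_0[OF vs1.subspace_span, THEN iffD2], intro ballI impI)
    fix x assume "x \<in> vs1.span (B - K)" "f x = 0"
    moreover have "vs1.span (B - K) \<subseteq> U"
      using span_B vs1.span_mono[of "B - K" B] by blast
    ultimately show "x = 0" using K(3) vs1.span_Int_span_Diff[OF B(3,1)] by blast
  qed
  have "f ` U = vs2.span (f ` (B - K))"
  proof -
    have "f ` B \<subseteq> insert 0 (f ` (B - K))" using B(1) K(1) by auto
    then have "vs2.span (f ` B) = vs2.span (f ` (B - K))"
      by (metis Diff_subset image_mono vs2.span_insert_0 vs2.span_mono subset_antisym)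
    then show ?thesis using f.span_image span_B by metis
  qed
  then have "vs2.dim (f ` U) = card (B - K)"
    using f.independent_injective_image[OF vs1.independent_mono[OF B(3)] inj]
      card_image[OF inj_on_subset[OF inj vs1.span_superset]]
    by (simp add: vs2.dim_eq_card_independent)
  moreover have "vs1.dim U = card B"
    using vs1.basis_card_eq_dim[OF B(2,4,3)] by simp
  moreover have "vs1.dim ?N = card K"
    using vs1.basis_card_eq_dim[OF K(1,3,2)] by simp
  ultimately show ?thesis
    using card_Diff_subset[OF finite_subset[OF B(1) \<open>finite B\<close>] B(1)]
      card_mono[OF \<open>finite B\<close> B(1)] by simp
qed

lemma dim_image_eq_inj_on:
  assumes "Vector_Spaces.linear s1 s2 f" and "vs1.subspace U" and "finite W" and "U \<subseteq> vs1.span W"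
    and "inj_on f U"
  shows "vs2.dim (f ` U) = vs1.dim U"
proof -
  have "{x\<in>U. f x = 0} = vs1.span {}"
    using assms(5) vs1.subspace_0[OF assms(2)] linear_0[OF assms(1)]
    by (auto simp: inj_on_def)
  then have "vs1.dim {x\<in>U. f x = 0} = 0"
    using vs1.dim_span[of "{}"] vs1.dim_eq_card_independent[OF vs1.independent_empty] by simp
  then show ?thesis
    using rank_nullity_subspace[OF assms(1-4)] by simp
qed

end

definition supported_on :: "'a set \<Rightarrow> ('a \<Rightarrow> 'b::zero) set" where
  "supported_on X = {g. \<forall>x. x \<notin> X \<longrightarrow> g x = 0}"

lemma sum_apply: "(\<Sum>x\<in>A. f x) y = (\<Sum>x\<in>A. f x y)"
  by (induct A rule: infinite_finite_induct) auto

lemma scale_indicator_supported_on: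
  "x \<in> X \<Longrightarrow> scale_fun c (indicator {x}) \<in> supported_on X"
  by (auto simp: supported_on_def scale_fun_def indicator_def)

lemma image_comp_Some_supported_on:
  "(\<lambda>p. p \<circ> Some) ` supported_on (insert None (Some ` X)) = (supported_on X :: ('a \<Rightarrow> 'b::zero) set)"
proof (rule equalityI)
  show "(\<lambda>p. p \<circ> Some) ` supported_on (insert None (Some ` X)) \<subseteq> (supported_on X :: ('a \<Rightarrow> 'b) set)"
    by (force simp: supported_on_def)
  show "(supported_on X :: ('a \<Rightarrow> 'b) set) \<subseteq> (\<lambda>p. p \<circ> Some) ` supported_on (insert None (Some ` X))"
  proof
    fix q :: "'a \<Rightarrow> 'b" assume "q \<in> supported_on X"
    then have "case_option 0 q \<in> supported_on (insert None (Some ` X))" "q = case_option 0 q \<circ> Some"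
      by (auto simp: supported_on_def split: option.split)
    then show "q \<in> (\<lambda>p. p \<circ> Some) ` supported_on (insert None (Some ` X))" by blast
  qed
qed

lemma subspace_supported_on: "pointwise.subspace (supported_on X :: ('a \<Rightarrow> 'b::field) set)"
  by (auto simp: pointwise.subspace_def supported_on_def scale_fun_def)

context
  fixes X :: "'a set"
  assumes "finite X"
begin

lemma sum_indicator_supported_on:
  assumes "g \<in> supported_on X"
  shows "(\<Sum>x\<in>X. scale_fun (g x) (indicator {x})) = (g :: 'a \<Rightarrow> 'b::field)"
proof
  fix y
  have "(\<Sum>x\<in>X. scale_fun (g x) (indicator {x})) y = (\<Sum>x\<in>X. if x = y then g y else 0)"
    unfolding sum_apply by (intro sum.cong) (auto simp: scale_fun_def)
  then show "(\<Sum>x\<in>X. scale_fun (g x) (indicator {x})) y = g y"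
    using assms \<open>finite X\<close> by (simp add: supported_on_def)
qed

lemma supported_on_subset_span:
  "supported_on X \<subseteq> pointwise.span ((\<lambda>x. indicator {x} :: 'a \<Rightarrow> 'b::field) ` X)"
proof
  fix g :: "'a \<Rightarrow> 'b" assume "g \<in> supported_on X"
  then have "g = (\<Sum>x\<in>X. scale_fun (g x) (indicator {x}))"
    by (simp add: sum_indicator_supported_on)
  also have "\<dots> \<in> pointwise.span ((\<lambda>x. indicator {x}) ` X)"
    by (intro pointwise.span_sum pointwise.span_scale pointwise.span_base) auto
  finally show "g \<in> pointwise.span ((\<lambda>x. indicator {x}) ` X)" .
qed

lemma dim_supported_on: "pointwise.dim (supported_on X :: ('a \<Rightarrow> 'b::field) set) = card X"
proof -
  let ?\<delta> = "\<lambda>x. indicator {x} :: 'a \<Rightarrow> 'b"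
  have "inj ?\<delta>"
    by (rule injI) (metis indicator_eq_1_iff singletonD singletonI)
  have "pointwise.independent (?\<delta> ` X)"
  proof (rule pointwise.independent_if_scalars_zero)
    fix c d assume sum0: "(\<Sum>y\<in>?\<delta> ` X. scale_fun (c y) y) = 0" and "d \<in> ?\<delta> ` X"
    then obtain a where "a \<in> X" "d = ?\<delta> a" by blast
    have "(\<Sum>y\<in>?\<delta> ` X. scale_fun (c y) y) a = (\<Sum>x\<in>X. c (?\<delta> x) * ?\<delta> x a)"
      using \<open>inj ?\<delta>\<close> by (simp add: sum_apply scale_fun_def sum.reindex inj_on_subset)
    also have "\<dots> = c d"
      using \<open>finite X\<close> \<open>a \<in> X\<close> \<open>d = ?\<delta> a\<close> by (simp add: indicator_def if_distrib)
    finally show "c d = 0" using sum0 by simp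
  qed (use \<open>finite X\<close> in simp)
  moreover have "?\<delta> ` X \<subseteq> supported_on X"
    by (auto simp: supported_on_def indicator_def)
  ultimately show ?thesis
    using pointwise.dim_unique[OF _ supported_on_subset_span]
      card_image[OF inj_on_subset[OF \<open>inj ?\<delta>\<close>]]
    by blast
qed

end

section \<open>Harmonic oscillator on an edge\<close>

lemma harmonic_oscillator_solution:
  fixes u u' :: "real \<Rightarrow> complex" and k :: real
  assumes "k \<noteq> 0" and "convex S" and "0 \<in> S"
    and u: "\<And>x. x \<in> S \<Longrightarrow> (u has_vector_derivative u' x) (at x within S)"
    and u': "\<And>x. x \<in> S \<Longrightarrow> (u' has_vector_derivative - of_real (k\<^sup>2) * u x) (at x within S)"
    and "x \<in> S"
  shows "u x = u 0 * cos (k * x) + u' 0 / k * sin (k * x)"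
    and "u' x = - k * u 0 * sin (k * x) + u' 0 * cos (k * x)"
proof -
  \<comment> \<open>First integrals of \<open>u'' = - k\<^sup>2 u\<close>: the vector \<open>(k u, u')\<close> rotated back by the angle \<open>k y\<close>.\<close>
  define w1 where "w1 y = k * u y * cos (k * y) - u' y * sin (k * y)" for y
  define w2 where "w2 y = k * u y * sin (k * y) + u' y * cos (k * y)" for y
  have "(w1 has_vector_derivative 0) (at y within S)" if "y \<in> S" for y
    unfolding w1_def using that
    by (auto intro!: derivative_eq_intros u u' simp: algebra_simps power2_eq_square)
  then obtain c1 where c1: "\<And>y. y \<in> S \<Longrightarrow> w1 y = c1"
    using has_vector_derivative_zero_constant[OF \<open>convex S\<close>] by blast
  have "(w2 has_vector_derivative 0) (at y within S)" if "y \<in> S" for y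
    unfolding w2_def using that
    by (auto intro!: derivative_eq_intros u u' simp: algebra_simps power2_eq_square)
  then obtain c2 where c2: "\<And>y. y \<in> S \<Longrightarrow> w2 y = c2"
    using has_vector_derivative_zero_constant[OF \<open>convex S\<close>] by blast
  obtain c s :: complex where c: "c = cos (k * x)" and s: "s = sin (k * x)"
    and pythagoras: "c * c + s * s = 1"
    by (simp only: flip: of_real_mult of_real_add) (simp flip: power2_eq_square)
  have "k * u x = w1 x * c + w2 x * s" "u' x = w2 x * c - w1 x * s"
    using c s pythagoras by (simp_all add: w1_def w2_def algebra_simps flip: distrib_left)
  moreover have "w1 x = k * u 0" "w2 x = u' 0"
    using c1[OF \<open>0 \<in> S\<close>] c2[OF \<open>0 \<in> S\<close>] c1[OF \<open>x \<in> S\<close>] c2[OF \<open>x \<in> S\<close>]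
    by (simp_all add: w1_def w2_def)
  ultimately show "u x = u 0 * cos (k * x) + u' 0 / k * sin (k * x)"
    and "u' x = - k * u 0 * sin (k * x) + u' 0 * cos (k * x)"
    using \<open>k \<noteq> 0\<close> c s by (simp_all add: field_simps)
qed

lemma edge_H2_derivative_has_vector_derivative:
  assumes "edge_H2 u u' u''" and "continuous_on {0..1} g"
    and "AE x in lborel. x \<in> {0..1} \<longrightarrow> u'' x = g x" and "x \<in> {0..1}"
  shows "(u' has_vector_derivative g x) (at x within {0..1})"
proof -
  obtain N where "negligible N" and N: "{x. \<not> (x \<in> {0..1} \<longrightarrow> u'' x = g x)} \<subseteq> N"
    using AE_completion[OF assms(3)] unfolding eventually_ae_filter_negligible by blast
  have u': "u' y = u' 0 + integral {0..y} g" if "y \<in> {0..1}" for y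
  proof -
    have "(u'' has_integral (u' y - u' 0)) {0..y}"
      using assms(1) that unfolding edge_H2_def by blast
    then have "(g has_integral (u' y - u' 0)) {0..y}"
      by (rule has_integral_spike[OF \<open>negligible N\<close>, rotated]) (use that N in auto)
    then show ?thesis by (simp add: integral_unique)
  qed
  moreover have "((\<lambda>y. u' 0 + integral {0..y} g) has_vector_derivative g x) (at x within {0..1})"
    using has_vector_derivative_add[OF has_vector_derivative_const
        integral_has_vector_derivative[OF assms(2,4)]]
    by simp
  ultimately show ?thesis
    by (rule has_vector_derivative_transform[OF assms(4)])
qed

lemma edge_eigenfunction_eq:
  fixes u u' u'' :: "real \<Rightarrow> complex" and k :: real
  assumes "k \<noteq> 0" and "edge_H2 u u' u''"
    and "AE x in lborel. x \<in> {0..1} \<longrightarrow> - u'' x = of_real (k\<^sup>2) * u x" and "x \<in> {0..1}"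
  shows "u x = u 0 * cos (k * x) + u' 0 / k * sin (k * x)"
    and "u' x = - k * u 0 * sin (k * x) + u' 0 * cos (k * x)"
proof -
  have u: "(u has_vector_derivative u' y) (at y within {0..1})" if "y \<in> {0..1}" for y
    using assms(2) that unfolding edge_H2_def by blast
  then have cont: "continuous_on {0..1} (\<lambda>y. - of_real (k\<^sup>2) * u y)"
    by (intro continuous_on_mult_left continuous_on_vector_derivative)
  have ae: "AE x in lborel. x \<in> {0..1} \<longrightarrow> u'' x = - of_real (k\<^sup>2) * u x"
    using assms(3) by (rule eventually_mono) (metis minus_minus mult_minus_left)
  have u': "(u' has_vector_derivative - of_real (k\<^sup>2) * u y) (at y within {0..1})"
    if "y \<in> {0..1}" for y
    by (rule edge_H2_derivative_has_vector_derivative[OF assms(2) cont ae that])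
  show "u x = u 0 * cos (k * x) + u' 0 / k * sin (k * x)"
    and "u' x = - k * u 0 * sin (k * x) + u' 0 * cos (k * x)"
    using harmonic_oscillator_solution[OF \<open>k \<noteq> 0\<close> convex_real_interval(5) _ u u' assms(4)]
    by simp_all
qed

lemma edge_H2_trigonometric:
  fixes A B :: complex and k :: real
  assumes "\<And>x. x \<in> {0..1} \<Longrightarrow> u x = A * cos (k * x) + B * sin (k * x)"
  shows "edge_H2 u (\<lambda>x. k * (B * cos (k * x) - A * sin (k * x)))
                   (\<lambda>x. - of_real (k\<^sup>2) * (A * cos (k * x) + B * sin (k * x)))"
proof -
  let ?v = "\<lambda>x. A * cos (k * x) + B * sin (k * x)"
  let ?v' = "\<lambda>x. k * (B * cos (k * x) - A * sin (k * x))"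
  let ?v'' = "\<lambda>x. - of_real (k\<^sup>2) * (A * cos (k * x) + B * sin (k * x))"
  have v: "(?v has_vector_derivative ?v' x) (at x within S)" for x S
    by (auto intro!: derivative_eq_intros simp: algebra_simps)
  have v': "(?v' has_vector_derivative ?v'' x) (at x within S)" for x S
    by (auto intro!: derivative_eq_intros simp: algebra_simps power2_eq_square)
  have "(u has_vector_derivative ?v' x) (at x within {0..1})" if "x \<in> {0..1}" for x
    using has_vector_derivative_transform[OF that, of u ?v] assms v by blast
  moreover have "(?v'' has_integral (?v' x - ?v' 0)) {0..x}" if "x \<in> {0..1}" for x
    using fundamental_theorem_of_calculus[of 0 x ?v' ?v''] v' that by auto
  moreover have "continuous_on {0..1} ?v'"
    by (intro continuous_intros)
  moreover have "?v'' absolutely_integrable_on {0..1}"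
    by (intro absolutely_integrable_continuous_real continuous_intros)
  moreover have "(\<lambda>x. (norm (?v'' x))\<^sup>2) integrable_on {0..1}"
    by (intro integrable_continuous_real continuous_intros)
  ultimately show ?thesis
    unfolding edge_H2_def by blast
qed

section \<open>Graphs with a twisted incidence map\<close>

locale twisted_graph =
  fixes V :: "'v set" and E :: "('v \<times> 'v) set" and s :: complex and \<sigma> :: "'v \<Rightarrow> complex"
  assumes finite_vertices: "finite V" and edges_subset: "E \<subseteq> V \<times> V"
    and connected: "graph_connected V E"
    and twist_square: "s * s = 1" and sigma_square: "\<And>v. \<sigma> v * \<sigma> v = 1"
    and sigma_edge: "\<And>a b. (a, b) \<in> E \<Longrightarrow> \<sigma> b = s * \<sigma> a"
begin

lemma finite_edges: "finite E"
  using finite_subset[OF edges_subset] finite_vertices by blast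

lemma sigma_cancel: "\<sigma> v * (\<sigma> v * z) = z"
  by (simp add: sigma_square flip: mult.assoc)

lemma twisted_function_eq_multiple_sigma:
  assumes "\<And>a b. (a, b) \<in> E \<Longrightarrow> \<phi> b = s * \<phi> a"
  shows "\<exists>c. \<forall>v\<in>V. \<phi> v = c * \<sigma> v"
proof (cases "V = {}")
  case False
  then obtain v0 where "v0 \<in> V" by blast
  have "\<phi> w * \<sigma> w = \<phi> v0 * \<sigma> v0" if "(v0, w) \<in> (E \<union> E\<inverse>)\<^sup>*" for w
    using that
  proof (induction rule: rtrancl_induct)
    case (step x w)
    have "\<phi> w * \<sigma> w = \<phi> x * \<sigma> x"
    proof (cases "(x, w) \<in> E")
      case True
      then have "\<phi> w * \<sigma> w = (s * s) * (\<phi> x * \<sigma> x)"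
        using assms sigma_edge by (simp add: algebra_simps)
      then show ?thesis using twist_square by simp
    next
      case False
      then have "(w, x) \<in> E" using step.hyps(2) by blast
      then have "\<phi> x * \<sigma> x = (s * s) * (\<phi> w * \<sigma> w)"
        using assms sigma_edge by (simp add: algebra_simps)
      then show ?thesis using twist_square by simp
    qed
    then show ?case using step.IH by simp
  qed simp
  then have "\<phi> w = (\<phi> v0 * \<sigma> v0) * \<sigma> w" if "w \<in> V" for w
    using connected \<open>v0 \<in> V\<close> that sigma_square[of w] unfolding graph_connected_def
    by (metis mult.assoc mult_1_right)
  then show ?thesis by blast
qed simp

definition incidence :: "('v \<times> 'v \<Rightarrow> complex) \<Rightarrow> 'v \<Rightarrow> complex" where
  "incidence q v = (if v \<in> V
     then (\<Sum>e\<in>{e\<in>E. fst e = v}. q e) - s * (\<Sum>e\<in>{e\<in>E. snd e = v}. q e) else 0)"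

lemma linear_incidence: "Vector_Spaces.linear scale_fun scale_fun incidence"
  unfolding Vector_Spaces.linear_iff
  by (auto simp: pointwise.vector_space_axioms incidence_def scale_fun_def fun_eq_iff algebra_simps
      sum.distrib sum_distrib_left)

lemma incidence_indicator:
  assumes "(a, b) \<in> E"
  shows "incidence (scale_fun c (indicator {(a, b)}))
    = scale_fun c (indicator {a}) - scale_fun (s * c) (indicator {b})" (is "?lhs = ?rhs")
proof
  fix v
  have "(\<Sum>e\<in>{e\<in>E. f e = v}. scale_fun c (indicator {(a, b)}) e) = (if f (a, b) = v then c else 0)"
    for f :: "'v \<times> 'v \<Rightarrow> 'v"
    using assms finite_edges by (simp add: scale_fun_def indicator_def sum.delta_remove if_distrib)
  then show "?lhs v = ?rhs v"
    using assms edges_subset by (auto simp: incidence_def scale_fun_def indicator_def)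
qed

lemma sum_sigma_incidence: "(\<Sum>v\<in>V. \<sigma> v * incidence q v) = 0"
proof -
  have group: "(\<Sum>v\<in>V. \<sigma> v * (\<Sum>e\<in>{e\<in>E. f e = v}. q e)) = (\<Sum>e\<in>E. \<sigma> (f e) * q e)"
    if "f ` E \<subseteq> V" for f :: "'v \<times> 'v \<Rightarrow> 'v"
    unfolding sum_distrib_left
    using sum.group[OF finite_edges finite_vertices that, of "\<lambda>e. \<sigma> (f e) * q e"]
    by (auto intro!: sum.cong)
  have "(\<Sum>v\<in>V. \<sigma> v * incidence q v) = (\<Sum>v\<in>V. \<sigma> v * (\<Sum>e\<in>{e\<in>E. fst e = v}. q e))
      - s * (\<Sum>v\<in>V. \<sigma> v * (\<Sum>e\<in>{e\<in>E. snd e = v}. q e))"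
    by (simp add: incidence_def right_diff_distrib sum_subtractf sum_distrib_left mult.left_commute)
  also have "\<dots> = (\<Sum>e\<in>E. \<sigma> (fst e) * q e) - s * (\<Sum>e\<in>E. \<sigma> (snd e) * q e)"
    using edges_subset by (subst (1 2) group) auto
  also have "s * (\<Sum>e\<in>E. \<sigma> (snd e) * q e) = (\<Sum>e\<in>E. \<sigma> (fst e) * q e)"
    unfolding sum_distrib_left
    by (intro sum.cong refl) (auto simp: sigma_edge twist_square mult.assoc[symmetric])
  finally show ?thesis by simp
qed

lemma subspace_incidence_image: "pointwise.subspace (incidence ` supported_on E)"
proof -
  interpret incidence: Vector_Spaces.linear scale_fun scale_fun incidence
    by (rule linear_incidence)
  show ?thesis
    by (rule incidence.subspace_image[OF subspace_supported_on])
qed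

lemma sigma_indicator_diff_in_incidence_image:
  assumes "(v, w) \<in> (E \<union> E\<inverse>)\<^sup>*"
  shows "scale_fun (\<sigma> w) (indicator {w}) - scale_fun (\<sigma> v) (indicator {v})
    \<in> incidence ` supported_on E"
  using assms
proof (induction rule: rtrancl_induct)
  case base
  show ?case
    using pointwise.subspace_0[OF subspace_incidence_image] by (simp only: diff_self)
next
  case (step x w)
  let ?\<delta> = "\<lambda>u. scale_fun (\<sigma> u) (indicator {u}) :: 'v \<Rightarrow> complex"
  have "?\<delta> x - ?\<delta> w \<in> incidence ` supported_on E"
  proof (cases "(x, w) \<in> E")
    case True
    then have "?\<delta> x - ?\<delta> w = incidence (scale_fun (\<sigma> x) (indicator {(x, w)}))"
      by (simp add: incidence_indicator sigma_edge)
    then show ?thesis using scale_indicator_supported_on[OF True] by blast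
  next
    case False
    then have "(w, x) \<in> E" using step.hyps(2) by blast
    then have "?\<delta> x - ?\<delta> w = incidence (scale_fun (- \<sigma> w) (indicator {(w, x)}))"
      using incidence_indicator[of w x "- \<sigma> w"] sigma_edge[of w x]
      by (simp add: scale_fun_def fun_eq_iff)
    then show ?thesis using scale_indicator_supported_on[OF \<open>(w, x) \<in> E\<close>] by blast
  qed
  moreover have "?\<delta> w - ?\<delta> v = (?\<delta> x - ?\<delta> v) - (?\<delta> x - ?\<delta> w)"
    by simp
  ultimately show ?case
    using pointwise.subspace_diff[OF subspace_incidence_image step.IH] by (simp only:)
qed

lemma sum_sigma_indicator_diff:
  assumes "v0 \<in> V" and "g \<in> supported_on V" and "(\<Sum>v\<in>V. \<sigma> v * g v) = 0"
  shows "g = (\<Sum>u\<in>V. scale_fun (g u * \<sigma> u)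
                 (scale_fun (\<sigma> u) (indicator {u}) - scale_fun (\<sigma> v0) (indicator {v0})))"
proof
  fix y
  let ?\<delta> = "\<lambda>u. scale_fun (\<sigma> u) (indicator {u}) :: 'v \<Rightarrow> complex"
  have "scale_fun (g u * \<sigma> u) (?\<delta> u - ?\<delta> v0) y
      = (if u = y then g u else 0) - (if y = v0 then \<sigma> v0 * (\<sigma> u * g u) else 0)" for u
    by (simp add: scale_fun_def indicator_def right_diff_distrib mult_ac sigma_cancel)
  then have "(\<Sum>u\<in>V. scale_fun (g u * \<sigma> u) (?\<delta> u - ?\<delta> v0)) y
      = (\<Sum>u\<in>V. if u = y then g u else 0) - (if y = v0 then \<sigma> v0 * (\<Sum>v\<in>V. \<sigma> v * g v) else 0)"
    by (cases "y = v0") (simp_all add: sum_apply sum_subtractf sum_distrib_left)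
  also have "\<dots> = g y"
    using assms finite_vertices by (auto simp: supported_on_def)
  finally show "g y = (\<Sum>u\<in>V. scale_fun (g u * \<sigma> u) (?\<delta> u - ?\<delta> v0)) y" ..
qed

lemma incidence_image:
  "incidence ` supported_on E = {g \<in> supported_on V. (\<Sum>v\<in>V. \<sigma> v * g v) = 0}"
proof
  have "incidence q \<in> supported_on V" for q
    by (simp add: supported_on_def incidence_def)
  then show "incidence ` supported_on E \<subseteq> {g \<in> supported_on V. (\<Sum>v\<in>V. \<sigma> v * g v) = 0}"
    using sum_sigma_incidence by blast
  show "{g \<in> supported_on V. (\<Sum>v\<in>V. \<sigma> v * g v) = 0} \<subseteq> incidence ` supported_on E"
  proof (cases "V = {}")
    case True
    then show ?thesis
      using pointwise.subspace_0[OF subspace_incidence_image]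
      by (auto simp: supported_on_def fun_eq_iff)
  next
    case False
    then obtain v0 where "v0 \<in> V" by blast
    have path: "(v0, u) \<in> (E \<union> E\<inverse>)\<^sup>*" if "u \<in> V" for u
      using connected \<open>v0 \<in> V\<close> that unfolding graph_connected_def by blast
    show ?thesis
    proof clarify
      fix g assume "g \<in> supported_on V" "(\<Sum>v\<in>V. \<sigma> v * g v) = 0"
      then have "g = (\<Sum>u\<in>V. scale_fun (g u * \<sigma> u)
                 (scale_fun (\<sigma> u) (indicator {u}) - scale_fun (\<sigma> v0) (indicator {v0})))"
        by (rule sum_sigma_indicator_diff[OF \<open>v0 \<in> V\<close>])
      also have "\<dots> \<in> incidence ` supported_on E"
        by (intro pointwise.subspace_sum[OF subspace_incidence_image]
            pointwise.subspace_scale[OF subspace_incidence_image]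
            sigma_indicator_diff_in_incidence_image path)
      finally show "g \<in> incidence ` supported_on E" .
    qed
  qed
qed

lemma dim_incidence_image:
  assumes "V \<noteq> {}"
  shows "pointwise.dim (incidence ` supported_on E) = card V - 1"
proof -
  interpret vector_space_pair "scale_fun :: complex \<Rightarrow> ('v \<Rightarrow> complex) \<Rightarrow> _"
    "(*) :: complex \<Rightarrow> complex \<Rightarrow> complex"
    by (simp add: vector_space_pair_def pointwise.vector_space_axioms
        vector_space_over_itself.vector_space_axioms)
  let ?\<psi> = "\<lambda>g. \<Sum>v\<in>V. \<sigma> v * g v"
  have "Vector_Spaces.linear scale_fun (*) ?\<psi>"
    unfolding Vector_Spaces.linear_iff
    by (auto simp: pointwise.vector_space_axioms vector_space_over_itself.vector_space_axioms
        scale_fun_def algebra_simps sum.distrib sum_distrib_left)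
  then have "pointwise.dim (supported_on V :: ('v \<Rightarrow> complex) set)
      = pointwise.dim {g \<in> supported_on V. ?\<psi> g = 0}
        + vector_space_over_itself.dim (?\<psi> ` supported_on V)"
    by (rule rank_nullity_subspace[OF _ subspace_supported_on _
          supported_on_subset_span[OF finite_vertices]]) (use finite_vertices in simp)
  moreover have "?\<psi> ` supported_on V = UNIV"
  proof -
    obtain v0 where "v0 \<in> V" using assms by blast
    have \<psi>: "?\<psi> (scale_fun (c * \<sigma> v0) (indicator {v0})) = c" for c
      using \<open>v0 \<in> V\<close> finite_vertices
      by (simp add: scale_fun_def indicator_def of_bool_def if_distrib mult.left_commute
          sigma_square cong: if_cong)
    have "c \<in> ?\<psi> ` supported_on V" for c
      using image_eqI[where f = ?\<psi>, OF sym[OF \<psi>[of c]] scale_indicator_supported_on[OF \<open>v0 \<in> V\<close>]] .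
    then show ?thesis by blast
  qed
  ultimately show ?thesis
    using dim_supported_on[OF finite_vertices, where 'b = complex] incidence_image by simp
qed

end

section \<open>Standing waves\<close>

lemma exists_sin_nonzero:
  fixes k :: real
  assumes "k > 0"
  shows "\<exists>x\<in>{0..1}. sin (k * x) \<noteq> 0"
proof
  let ?x = "min 1 (pi / (2 * k))"
  have "k * ?x = min k (pi / 2)"
    using assms by (simp add: min_mult_distrib_left)
  then have "0 < k * ?x" "k * ?x < pi"
    using assms pi_gt_zero by (auto simp: min_def)
  then show "sin (k * ?x) \<noteq> 0"
    using sin_gt_zero by fastforce
  show "?x \<in> {0..1}"
    using assms by simp
qed

locale standing_waves = twisted_graph V E s \<sigma>
  for V :: "'v set" and E s \<sigma> +
  fixes k :: real
  assumes k_pos: "k > 0" and sin_k: "sin k = 0" and cos_k: "complex_of_real (cos k) = s"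
begin

text \<open>An amplitude vector \<open>p\<close> holds the cosine amplitude \<open>p None\<close>, common to all edges up to the
  sign \<open>\<sigma>\<close> of the initial vertex, and the sine amplitude \<open>p (Some e)\<close> of every edge \<open>e\<close>.\<close>

definition wave :: "(('v \<times> 'v) option \<Rightarrow> complex) \<Rightarrow> 'v \<times> 'v \<Rightarrow> real \<Rightarrow> complex" where
  "wave p = (\<lambda>e x. if e \<in> E \<and> x \<in> {0..1}
     then p None * \<sigma> (fst e) * cos (k * x) + p (Some e) * sin (k * x) else 0)"

definition wave_amplitudes :: "(('v \<times> 'v) option \<Rightarrow> complex) set" where
  "wave_amplitudes = {p \<in> supported_on (insert None (Some ` E)). incidence (p \<circ> Some) = 0}"

lemma linear_wave: "Vector_Spaces.linear scale_fun fscale wave"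
  unfolding Vector_Spaces.linear_iff
  by (auto simp: pointwise.vector_space_axioms vector_space_fscale wave_def scale_fun_def fscale_def
      fun_eq_iff algebra_simps)

lemma inj_on_wave:
  assumes "E \<noteq> {}"
  shows "inj_on wave (supported_on (insert None (Some ` E)))"
proof -
  interpret wave: Vector_Spaces.linear scale_fun fscale wave
    by (rule linear_wave)
  have "p = 0" if p: "p \<in> supported_on (insert None (Some ` E))" and "wave p = 0" for p
  proof -
    have wave0: "wave p e x = 0" for e x
      using \<open>wave p = 0\<close> by simp
    obtain e0 where "e0 \<in> E" using assms by blast
    then have p_None: "p None = 0"
      using wave0[of e0 0] sigma_square[of "fst e0"] by (auto simp: wave_def)
    have p_Some: "p (Some e) = 0" if "e \<in> E" for e
    proof -
      obtain x where "x \<in> {0..1}" "sin (k * x) \<noteq> 0"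
        using exists_sin_nonzero[OF k_pos] by blast
      then show ?thesis
        using wave0[of e x] \<open>p None = 0\<close> that by (simp add: wave_def)
    qed
    show "p = 0"
    proof
      fix y
      show "p y = 0 y"
        using p_None p_Some p by (cases y; cases "y \<in> Some ` E") (auto simp: supported_on_def)
    qed
  qed
  then show ?thesis
    using wave.inj_on_iff_eq_0[OF subspace_supported_on] by blast
qed

lemma wave_in_eigenspace:
  assumes "p \<in> wave_amplitudes"
  shows "wave p \<in> eigenspace_L V E (of_real (k\<^sup>2))"
proof -
  define f' where
    "f' e x = k * (p (Some e) * cos (k * x) - p None * \<sigma> (fst e) * sin (k * x))" for e x
  define f'' where
    "f'' e x = - of_real (k\<^sup>2) * (p None * \<sigma> (fst e) * cos (k * x) + p (Some e) * sin (k * x))"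
    for e x
  have H2: "\<forall>e\<in>E. edge_H2 (wave p e) (f' e) (f'' e)"
  proof
    fix e assume "e \<in> E"
    then show "edge_H2 (wave p e) (f' e) (f'' e)"
      unfolding f'_def f''_def by (intro edge_H2_trigonometric) (simp add: wave_def)
  qed
  have continuous: "\<forall>(a, b)\<in>E. wave p (a, b) 0 = p None * \<sigma> a \<and> wave p (a, b) 1 = p None * \<sigma> b"
    using sigma_edge cos_k sin_k by (auto simp: wave_def mult.commute)
  have kirchhoff: "\<forall>v\<in>V. (\<Sum>e\<in>{e\<in>E. fst e = v}. f' e 0) - (\<Sum>e\<in>{e\<in>E. snd e = v}. f' e 1) = 0"
  proof
    fix v assume "v \<in> V"
    have "(\<Sum>e\<in>{e\<in>E. fst e = v}. f' e 0) - (\<Sum>e\<in>{e\<in>E. snd e = v}. f' e 1)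
        = k * incidence (p \<circ> Some) v"
      using \<open>v \<in> V\<close> cos_k sin_k
      by (simp add: f'_def incidence_def sum_distrib_left right_diff_distrib mult_ac)
    then show "(\<Sum>e\<in>{e\<in>E. fst e = v}. f' e 0) - (\<Sum>e\<in>{e\<in>E. snd e = v}. f' e 1) = 0"
      using assms by (simp add: wave_amplitudes_def)
  qed
  have "in_dom_L V E (wave p) f' f''"
    unfolding in_dom_L_def using H2 continuous kirchhoff by (intro conjI exI) assumption+
  moreover have "\<forall>e\<in>E. AE x in lborel. x \<in> {0..1} \<longrightarrow> - f'' e x = of_real (k\<^sup>2) * wave p e x"
    by (simp add: f''_def wave_def)
  moreover have "normalised_fun E (wave p)"
    by (simp add: normalised_fun_def wave_def)
  ultimately show ?thesis
    unfolding eigenspace_L_def by blast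
qed

lemma eigenfunction_edge_form:
  assumes "f \<in> eigenspace_L V E (of_real (k\<^sup>2))"
  shows "\<exists>B c. B \<in> supported_on E \<and> incidence B = 0 \<and>
    (\<forall>e\<in>E. \<forall>x\<in>{0..1}. f e x = c * \<sigma> (fst e) * cos (k * x) + B e * sin (k * x))"
proof -
  obtain f' f'' \<phi> where H2: "\<forall>e\<in>E. edge_H2 (f e) (f' e) (f'' e)"
    and continuous: "\<forall>(a, b)\<in>E. f (a, b) 0 = \<phi> a \<and> f (a, b) 1 = \<phi> b"
    and kirchhoff: "\<forall>v\<in>V. (\<Sum>e\<in>{e\<in>E. fst e = v}. f' e 0) - (\<Sum>e\<in>{e\<in>E. snd e = v}. f' e 1) = 0"
    and eigen: "\<forall>e\<in>E. AE x in lborel. x \<in> {0..1} \<longrightarrow> - f'' e x = of_real (k\<^sup>2) * f e x"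
    using assms unfolding eigenspace_L_def in_dom_L_def by blast
  have k0: "k \<noteq> 0" using k_pos by simp
  have f: "f e x = f e 0 * cos (k * x) + f' e 0 / k * sin (k * x)"
    and f': "f' e x = - k * f e 0 * sin (k * x) + f' e 0 * cos (k * x)"
    if "e \<in> E" "x \<in> {0..1}" for e x
    using edge_eigenfunction_eq[OF k0 H2[rule_format, OF that(1)] eigen[rule_format, OF that(1)]
        that(2)]
    by auto
  have f1: "f e 1 = s * f e 0" and f'1: "f' e 1 = s * f' e 0" if "e \<in> E" for e
    using f[OF that, of 1] f'[OF that, of 1] cos_k sin_k by (simp_all add: mult.commute)
  obtain c where c: "\<forall>v\<in>V. \<phi> v = c * \<sigma> v"
    using twisted_function_eq_multiple_sigma[of \<phi>] continuous f1 by fastforce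
  define B where "B e = (if e \<in> E then f' e 0 / k else 0)" for e
  have "B \<in> supported_on E"
    by (simp add: supported_on_def B_def)
  moreover have "incidence B = 0"
  proof
    fix v
    have "incidence B v = (if v \<in> V then
        ((\<Sum>e\<in>{e\<in>E. fst e = v}. f' e 0) - (\<Sum>e\<in>{e\<in>E. snd e = v}. f' e 1)) / k else 0)"
      by (simp add: incidence_def B_def f'1 diff_divide_distrib sum_divide_distrib sum_distrib_left)
    then show "incidence B v = 0 v"
      using kirchhoff by simp
  qed
  moreover have "f e x = c * \<sigma> (fst e) * cos (k * x) + B e * sin (k * x)"
    if "e \<in> E" "x \<in> {0..1}" for e x
  proof -
    obtain a b where "e = (a, b)" by (cases e)
    with that have "f e 0 = \<phi> a" "a \<in> V"
      using continuous edges_subset by auto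
    then show ?thesis
      using f[OF that] c \<open>e = (a, b)\<close> that(1) by (simp add: B_def)
  qed
  ultimately show ?thesis
    by blast
qed

lemma eigenfunction_in_wave_image:
  assumes "f \<in> eigenspace_L V E (of_real (k\<^sup>2))"
  shows "f \<in> wave ` wave_amplitudes"
proof -
  obtain B c where B: "B \<in> supported_on E" "incidence B = 0"
    and f: "\<forall>e\<in>E. \<forall>x\<in>{0..1}. f e x = c * \<sigma> (fst e) * cos (k * x) + B e * sin (k * x)"
    using eigenfunction_edge_form[OF assms] by blast
  define p where "p = case_option c B"
  have "p \<circ> Some = B"
    by (simp add: p_def fun_eq_iff)
  moreover have "p \<in> supported_on (insert None (Some ` E))"
    using B(1) by (auto simp: supported_on_def p_def split: option.split)
  ultimately have "p \<in> wave_amplitudes"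
    using B(2) by (simp add: wave_amplitudes_def)
  moreover have "f = wave p"
  proof (intro ext)
    fix e x
    have "f e x = 0" if "\<not> (e \<in> E \<and> x \<in> {0..1})"
      using assms that unfolding eigenspace_L_def normalised_fun_def by blast
    then show "f e x = wave p e x"
      using f by (auto simp: wave_def p_def)
  qed
  ultimately show ?thesis
    by blast
qed

lemma linear_incidence_Some: "Vector_Spaces.linear scale_fun scale_fun (\<lambda>p. incidence (p \<circ> Some))"
proof -
  have "Vector_Spaces.linear scale_fun scale_fun (\<lambda>p :: ('v \<times> 'v) option \<Rightarrow> complex. p \<circ> Some)"
    by (auto simp: Vector_Spaces.linear_iff pointwise.vector_space_axioms scale_fun_def)
  then show ?thesis
    using Vector_Spaces.linear_compose[OF _ linear_incidence] by (simp add: comp_def)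
qed

lemma subspace_wave_amplitudes: "pointwise.subspace wave_amplitudes"
proof -
  interpret incidence: Vector_Spaces.linear scale_fun scale_fun "\<lambda>p. incidence (p \<circ> Some)"
    by (rule linear_incidence_Some)
  have "wave_amplitudes = supported_on (insert None (Some ` E)) \<inter> {p. incidence (p \<circ> Some) = 0}"
    by (auto simp: wave_amplitudes_def)
  then show ?thesis
    using pointwise.subspace_inter[OF subspace_supported_on incidence.subspace_kernel] by simp
qed

lemma dim_wave_amplitudes:
  assumes "V \<noteq> {}"
  shows "int (pointwise.dim wave_amplitudes) = int (card E) - int (card V) + 2"
proof -
  let ?X = "insert None (Some ` E)"
  interpret vector_space_pair "scale_fun :: complex \<Rightarrow> (('v \<times> 'v) option \<Rightarrow> complex) \<Rightarrow> _"
    "scale_fun :: complex \<Rightarrow> ('v \<Rightarrow> complex) \<Rightarrow> _"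
    by (simp add: vector_space_pair_def pointwise.vector_space_axioms)
  have "pointwise.dim (supported_on ?X :: (('v \<times> 'v) option \<Rightarrow> complex) set)
      = pointwise.dim wave_amplitudes
        + pointwise.dim ((\<lambda>p. incidence (p \<circ> Some)) ` supported_on ?X)"
    unfolding wave_amplitudes_def
    by (rule rank_nullity_subspace[OF linear_incidence_Some subspace_supported_on _
          supported_on_subset_span]) (simp_all add: finite_edges)
  moreover have "(\<lambda>p. incidence (p \<circ> Some)) ` supported_on ?X = incidence ` supported_on E"
    by (simp add: image_comp_Some_supported_on image_image[symmetric, of incidence "\<lambda>p. p \<circ> Some"])
  moreover have "card ?X = card E + 1"
    using finite_edges by (simp add: card_image)
  moreover have "finite ?X"
    using finite_edges by simp
  ultimately have "card E + 1 = pointwise.dim wave_amplitudes + (card V - 1)"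
    using dim_supported_on[of ?X, where 'b = complex] dim_incidence_image[OF assms]
    by (simp only:)
  moreover have "card V > 0"
    using finite_vertices assms by (simp add: card_gt_0_iff)
  ultimately show ?thesis
    by linarith
qed

lemma dim_eigenspace:
  assumes "E \<noteq> {}"
  shows "int (vector_space.dim fscale (eigenspace_L V E (of_real (k\<^sup>2))))
    = int (card E) - int (card V) + 2"
proof -
  interpret vector_space_pair "scale_fun :: complex \<Rightarrow> (('v \<times> 'v) option \<Rightarrow> complex) \<Rightarrow> _" fscale
    by (simp add: vector_space_pair_def pointwise.vector_space_axioms vector_space_fscale)
  let ?X = "insert None (Some ` E)"
  have "wave_amplitudes \<subseteq> supported_on ?X"
    by (auto simp: wave_amplitudes_def)
  moreover have "finite ?X"
    using finite_edges by simp
  ultimately have "vector_space.dim fscale (wave ` wave_amplitudes) = pointwise.dim wave_amplitudes"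
    using dim_image_eq_inj_on[OF linear_wave subspace_wave_amplitudes _ _
        inj_on_subset[OF inj_on_wave[OF assms]]] supported_on_subset_span[of ?X]
    by blast
  moreover have "eigenspace_L V E (of_real (k\<^sup>2)) = wave ` wave_amplitudes"
    using wave_in_eigenspace eigenfunction_in_wave_image by blast
  ultimately have
    "vector_space.dim fscale (eigenspace_L V E (of_real (k\<^sup>2))) = pointwise.dim wave_amplitudes"
    by (simp only:)
  moreover have "V \<noteq> {}"
    using assms edges_subset by blast
  ultimately show ?thesis
    using dim_wave_amplitudes by simp
qed

end

theorem theorem2p3:
  fixes V :: "'v set" and E :: "('v \<times> 'v) set" and n :: nat
  assumes "simple_graph V E" and "graph_connected V E" and "graph_bipartite V E"
    and "E \<noteq> {}"
    and "n \<ge> 1"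
  shows "int (vector_space.dim fscale (eigenspace_L V E (complex_of_real ((real n * pi)\<^sup>2))))
           = int (card E) - int (card V) + 2"
proof -
  obtain A where A: "\<forall>(a, b)\<in>E. a \<in> A \<longleftrightarrow> b \<notin> A"
    using assms(3) unfolding graph_bipartite_def by blast
  define s :: complex where "s = (-1) ^ n"
  define \<sigma> where "\<sigma> v = (if v \<in> A then 1 else s)" for v
  have "s * s = 1"
    by (simp add: s_def flip: power_mult_distrib)
  interpret standing_waves V E s \<sigma> "real n * pi"
  proof
    show "finite V" "E \<subseteq> V \<times> V"
      using assms(1) unfolding simple_graph_def by auto
    show "\<sigma> b = s * \<sigma> a" if "(a, b) \<in> E" for a b
      using A that \<open>s * s = 1\<close> by (auto simp: \<sigma>_def)
  qed (use assms(2,5) \<open>s * s = 1\<close> in \<open>auto simp: \<sigma>_def s_def\<close>)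
  show ?thesis
    using dim_eigenspace[OF assms(4)] by simp
qed

end
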